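(* Let $\mathcal{C}$ be a permutation class with $p$-basis $\mathcal{B}$, let $\mathcal{M}=\{M_{\tau,top}:\tau\in\mathcal{B}\}$, and let $c_n$ be the number of permutations of size $n$ in $\mathcal{C}$. Then the permutation class $Av_{\mathfrak{S}}(\mathcal{M})$ is enumerated by the sequence $(n\cdot c_{n-1})_n$, i.e. it contains exactly $n\,c_{n-1}$ permutations of size $n$. The same holds when $M_{\tau,top}$ is replaced by $M_{\tau,bottom}$, $M_{\tau,right}$ or $M_{\tau,left}$.
   Context: A permutation $\sigma$ of $\{1,\dots,n\}$ (size $n$) is identified with its permutation matrix ($M_\sigma(i,j)=1$ iff $i=\sigma(j)$, rows numbered bottom to top). A matrix is a submatrix of another if obtained by deleting rows and/or columns; the pattern order on permutations is this order restricted to permutation matrices, and a permutation class is a set closed downward for it. The $p$-basis of $\mathcal{C}$ is the set of permutations not in $\mathcal{C}$ that are minimal for the pattern order among those not in $\mathcal{C}$. For a permutation $\tau$, $M_{\tau,top}$ (resp. $M_{\tau,bottom}$) is the matrix obtained by adding a row of $0$'s above (resp. below) the permutation matrix of $\tau$, and $M_{\tau,right}$ (resp. $M_{\tau,left}$) by adding a column of $0$'s to its right (resp. left). $Av_{\mathfrak{S}}(\mathcal{M})$ is the set of permutations with no submatrix in $\mathcal{M}$. The count $c_0$ refers to the empty permutation (so $c_0=1$ when $n=1$ is considered). *)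

theory Defs
  imports "HOL-Combinatorics.Permutations"
begin

text \<open>A 0/1 matrix is a triple (number of rows, number of columns, set of positions
  (i,j) carrying a 1), with row i (numbered from 0, bottom to top) and column j
  (numbered from 0, left to right).\<close>
type_synonym mat01 = "nat \<times> nat \<times> (nat \<times> nat) set"

type_synonym perm = "nat \<times> (nat \<Rightarrow> nat)"

definition is_perm :: "perm \<Rightarrow> bool" where
  "is_perm p \<longleftrightarrow> snd p permutes {..<fst p}"

definition perm_mat :: "perm \<Rightarrow> mat01" where
  "perm_mat p = (fst p, fst p, {(snd p j, j) | j. j < fst p})"

definition submatrix :: "mat01 \<Rightarrow> mat01 \<Rightarrow> bool" where
  "submatrix A B \<longleftrightarrow>
     (case A of (r', c', S') \<Rightarrow> case B of (r, c, S) \<Rightarrow>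
       (\<exists>f g. strict_mono_on {..<r'} f \<and> (\<forall>i<r'. f i < r) \<and>
              strict_mono_on {..<c'} g \<and> (\<forall>j<c'. g j < c) \<and>
              (\<forall>i<r'. \<forall>j<c'. ((i, j) \<in> S' \<longleftrightarrow> (f i, g j) \<in> S))))"

definition pattern_le :: "perm \<Rightarrow> perm \<Rightarrow> bool" where
  "pattern_le p q \<longleftrightarrow> submatrix (perm_mat p) (perm_mat q)"

definition perm_class :: "perm set \<Rightarrow> bool" where
  "perm_class C \<longleftrightarrow> (\<forall>p\<in>C. is_perm p) \<and>
     (\<forall>p q. q \<in> C \<longrightarrow> is_perm p \<longrightarrow> pattern_le p q \<longrightarrow> p \<in> C)"

definition p_basis :: "perm set \<Rightarrow> perm set" where
  "p_basis C = {p. is_perm p \<and> p \<notin> C \<and>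
     (\<forall>q. is_perm q \<longrightarrow> pattern_le q p \<longrightarrow> q \<noteq> p \<longrightarrow> q \<in> C)}"

datatype side = Top | Bottom | Right | Left

fun ext_mat :: "side \<Rightarrow> perm \<Rightarrow> mat01" where
  "ext_mat Top p = (fst p + 1, fst p, {(snd p j, j) | j. j < fst p})"
| "ext_mat Bottom p = (fst p + 1, fst p, {(snd p j + 1, j) | j. j < fst p})"
| "ext_mat Right p = (fst p, fst p + 1, {(snd p j, j) | j. j < fst p})"
| "ext_mat Left p = (fst p, fst p + 1, {(snd p j, j + 1) | j. j < fst p})"

definition Av :: "mat01 set \<Rightarrow> perm set" where
  "Av M = {p. is_perm p \<and> \<not> (\<exists>A\<in>M. submatrix A (perm_mat p))}"

definition count_size :: "perm set \<Rightarrow> nat \<Rightarrow> nat" where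
  "count_size C n = card {p \<in> C. fst p = n}"

end

theory Submission
  imports Defs
begin

text \<open>A permutation p of size n \<ge> 1 contains M_{tau,top} iff tau occurs in p with the
  topmost point of p removed: the empty extra row must lie above all rows of an occurrence
  of tau, so the occurrence avoids the top row of p, equivalently the column of its topmost
  point; conversely the top row of p can then be added, being empty on all other columns.
  As a permutation lies in C iff it contains no basis element, p avoids every M_{tau,top} iff
  p minus its topmost point lies in C. Removing the topmost point and recording its column
  is a bijection onto {0..n-1} times the permutations of size n-1, whence n c_{n-1}. The bottom
  side is analogous; left and right reduce to bottom and top by transposition, which
  inverts permutations.\<close>

lemma strict_mono_on_fun_upd_lessThan:
  fixes f :: "nat \<Rightarrow> 'a::order"
  assumes "strict_mono_on {..<k} f" and "\<forall>i<k. f i < x"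
  shows "strict_mono_on {..<Suc k} (f(k := x))"
proof (rule strict_mono_onI)
  fix a b assume "a \<in> {..<Suc k}" "b \<in> {..<Suc k}" "a < b"
  then show "(f(k := x)) a < (f(k := x)) b"
    using assms strict_mono_onD[of "{..<k}" f a b] by (auto simp: less_Suc_eq)
qed

lemma strict_mono_on_case_nat_lessThan:
  fixes f :: "nat \<Rightarrow> 'a::order"
  assumes "strict_mono_on {..<k} f" and "\<forall>i<k. x < f i"
  shows "strict_mono_on {..<Suc k} (case_nat x f)"
proof (rule strict_mono_onI)
  fix a b :: nat assume "a \<in> {..<Suc k}" "b \<in> {..<Suc k}" "a < b"
  then show "case_nat x f a < case_nat x f b"
    using assms strict_mono_onD[of "{..<k}" f "a - 1" "b - 1"] by (cases a; cases b) auto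
qed

lemma strict_mono_on_comp_Suc_lessThan:
  fixes f :: "nat \<Rightarrow> 'a::order"
  assumes "strict_mono_on {..<Suc k} f"
  shows "strict_mono_on {..<k} (f \<circ> Suc)"
  using strict_mono_onD[OF assms] by (auto intro!: strict_mono_onI)

lemma strict_mono_on_lessThan_add_le:
  fixes f :: "nat \<Rightarrow> nat"
  assumes "strict_mono_on {..<n} f" and "i + d < n"
  shows "f i + d \<le> f (i + d)"
  using assms(2)
proof (induction d)
  case (Suc d)
  then have "f (i + d) < f (i + Suc d)"
    by (intro strict_mono_onD[OF assms(1)]) auto
  with Suc show ?case by simp
qed simp

lemma strict_mono_on_lessThan_eq_self:
  fixes f :: "nat \<Rightarrow> nat"
  assumes "strict_mono_on {..<n} f" and "\<forall>i<n. f i < n" and "i < n"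
  shows "f i = i"
proof -
  have "f 0 + i \<le> f i"
    using strict_mono_on_lessThan_add_le[OF assms(1), of 0 i] assms(3) by simp
  moreover have "f i + (n - 1 - i) \<le> f (n - 1)"
    using strict_mono_on_lessThan_add_le[OF assms(1), of i "n - 1 - i"] assms(3) by simp
  moreover have "f (n - 1) < n"
    using assms(2,3) by simp
  ultimately show ?thesis by linarith
qed

definition pattern_embedding :: "perm \<Rightarrow> perm \<Rightarrow> (nat \<Rightarrow> nat) \<Rightarrow> (nat \<Rightarrow> nat) \<Rightarrow> bool" where
  "pattern_embedding \<tau> p f g \<longleftrightarrow>
     strict_mono_on {..<fst \<tau>} f \<and> (\<forall>i<fst \<tau>. f i < fst p) \<and>
     strict_mono_on {..<fst \<tau>} g \<and> (\<forall>j<fst \<tau>. g j < fst p) \<and>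
     (\<forall>i<fst \<tau>. \<forall>j<fst \<tau>. i = snd \<tau> j \<longleftrightarrow> f i = snd p (g j))"

lemma pattern_le_iff_embedding: "pattern_le \<tau> p \<longleftrightarrow> (\<exists>f g. pattern_embedding \<tau> p f g)"
proof -
  obtain k st n s where "\<tau> = (k, st)" and "p = (n, s)"
    by (cases \<tau>, cases p)
  then show ?thesis
    unfolding pattern_le_def submatrix_def perm_mat_def pattern_embedding_def
    by (simp, intro ex_cong1 conj_cong refl) blast
qed

lemma pattern_embedding_trans:
  assumes "pattern_embedding \<sigma> \<tau> f g" and "pattern_embedding \<tau> p f' g'"
  shows "pattern_embedding \<sigma> p (f' \<circ> f) (g' \<circ> g)"
proof -
  have f: "\<forall>i<fst \<sigma>. f i < fst \<tau>" and g: "\<forall>j<fst \<sigma>. g j < fst \<tau>"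
    using assms(1) by (auto simp: pattern_embedding_def)
  have "strict_mono_on {..<fst \<sigma>} (f' \<circ> f)" "strict_mono_on {..<fst \<sigma>} (g' \<circ> g)"
    using assms f g unfolding pattern_embedding_def by (auto intro!: monotone_on_o)
  moreover have "i = snd \<sigma> j \<longleftrightarrow> f' (f i) = snd p (g' (g j))" if "i < fst \<sigma>" "j < fst \<sigma>" for i j
    using assms that f g unfolding pattern_embedding_def by auto
  ultimately show ?thesis
    using assms f g unfolding pattern_embedding_def by auto
qed

lemma pattern_le_refl: "pattern_le p p"
  unfolding pattern_le_iff_embedding pattern_embedding_def
  by (rule exI[of _ id], rule exI[of _ id]) (simp add: strict_mono_on_id)

lemma pattern_le_trans: "pattern_le \<sigma> \<tau> \<Longrightarrow> pattern_le \<tau> p \<Longrightarrow> pattern_le \<sigma> p"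
  unfolding pattern_le_iff_embedding by (blast intro: pattern_embedding_trans)

lemma pattern_le_size_le:
  assumes "pattern_le \<tau> p"
  shows "fst \<tau> \<le> fst p"
proof (cases "fst \<tau>")
  case (Suc k)
  obtain f g where "pattern_embedding \<tau> p f g"
    using assms pattern_le_iff_embedding by blast
  then have "strict_mono_on {..<Suc k} f" and "f k < fst p"
    using Suc by (auto simp: pattern_embedding_def)
  with strict_mono_on_lessThan_add_le[of "Suc k" f 0 k] show ?thesis
    using Suc by simp
qed simp

lemma pattern_le_same_size_eq:
  assumes "pattern_le \<tau> p" and "fst \<tau> = fst p" and "is_perm \<tau>" and "is_perm p"
  shows "\<tau> = p"
proof -
  obtain n st s where \<tau>: "\<tau> = (n, st)" and p: "p = (n, s)"
    using assms(2) by (cases \<tau>, cases p) auto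
  obtain f g where emb: "pattern_embedding \<tau> p f g"
    using assms(1) pattern_le_iff_embedding by blast
  have f: "f i = i" and g: "g i = i" if "i < n" for i
    using emb that strict_mono_on_lessThan_eq_self unfolding \<tau> p pattern_embedding_def by auto
  have st: "st permutes {..<n}" and s: "s permutes {..<n}"
    using assms(3,4) unfolding \<tau> p is_perm_def by auto
  have "st j = s j" for j
  proof (cases "j < n")
    case True
    then have "st j < n"
      using permutes_in_image[OF st] by simp
    moreover have "st j = st j \<longleftrightarrow> f (st j) = s (g j)"
      using emb True \<open>st j < n\<close> unfolding \<tau> p pattern_embedding_def fst_conv snd_conv by blast
    ultimately show ?thesis
      using True by (simp add: f g)
  qed (simp add: permutes_not_in[OF st] permutes_not_in[OF s])
  then show ?thesis
    unfolding \<tau> p by auto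
qed

lemma perm_class_mem_iff_avoids_basis:
  assumes C: "perm_class C" and q: "is_perm q"
  shows "q \<in> C \<longleftrightarrow> \<not> (\<exists>\<tau>\<in>p_basis C. pattern_le \<tau> q)"
proof
  assume "q \<in> C"
  then show "\<not> (\<exists>\<tau>\<in>p_basis C. pattern_le \<tau> q)"
    using C unfolding perm_class_def p_basis_def by blast
next
  assume no_basis: "\<not> (\<exists>\<tau>\<in>p_basis C. pattern_le \<tau> q)"
  show "q \<in> C"
  proof (rule ccontr)
    define P where "P t \<longleftrightarrow> is_perm t \<and> t \<notin> C \<and> pattern_le t q" for t
    assume "q \<notin> C"
    then have "P q"
      using q pattern_le_refl unfolding P_def by blast
    then obtain t where t: "P t" and t_min: "\<And>r. P r \<Longrightarrow> fst t \<le> fst r"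
      using ex_has_least_nat[of P q fst] by blast
    have "t \<in> p_basis C"
      unfolding p_basis_def
    proof (intro CollectI conjI allI impI)
      show "is_perm t" and "t \<notin> C"
        using t unfolding P_def by auto
      fix r assume r: "is_perm r" "pattern_le r t" "r \<noteq> t"
      show "r \<in> C"
      proof (rule ccontr)
        assume "r \<notin> C"
        with r t have "P r"
          unfolding P_def using pattern_le_trans by blast
        with t_min pattern_le_size_le[OF r(2)] have "fst r = fst t"
          by (simp add: le_antisym)
        with r t show False
          using pattern_le_same_size_eq unfolding P_def by blast
      qed
    qed
    with no_basis t show False
      unfolding P_def by blast
  qed
qed

definition skip :: "nat \<Rightarrow> nat \<Rightarrow> nat" where
  "skip m j = (if j < m then j else Suc j)"

definition unskip :: "nat \<Rightarrow> nat \<Rightarrow> nat" where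
  "unskip m j = (if j < m then j else j - 1)"

lemma strict_mono_skip: "strict_mono (skip m)"
  by (rule strict_monoI) (simp add: skip_def)

lemma skip_neq: "skip m j \<noteq> m"
  by (simp add: skip_def)

lemma unskip_skip [simp]: "unskip m (skip m j) = j"
  by (simp add: skip_def unskip_def)

lemma skip_unskip: "j \<noteq> m \<Longrightarrow> skip m (unskip m j) = j"
  by (cases j) (auto simp: skip_def unskip_def)

lemma unskip_inj: "a \<noteq> m \<Longrightarrow> b \<noteq> m \<Longrightarrow> unskip m a = unskip m b \<Longrightarrow> a = b"
  by (metis skip_unskip)

lemma eq_unskip_iff: "x \<noteq> m \<Longrightarrow> y = unskip m x \<longleftrightarrow> skip m y = x"
  by (auto simp: skip_def unskip_def)

lemma unskip_less_unskip: "a < b \<Longrightarrow> a \<noteq> m \<Longrightarrow> b \<noteq> m \<Longrightarrow> unskip m a < unskip m b"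
  by (auto simp: unskip_def)

lemma skip_less: "j < n - 1 \<Longrightarrow> skip m j < n"
  by (auto simp: skip_def)

lemma unskip_less: "j < n \<Longrightarrow> j \<noteq> m \<Longrightarrow> m < n \<Longrightarrow> unskip m j < n - 1"
  by (auto simp: unskip_def)

definition remove_point :: "perm \<Rightarrow> nat \<Rightarrow> perm" where
  "remove_point p m =
     (fst p - 1, \<lambda>j. if j < fst p - 1 then unskip (snd p m) (snd p (skip m j)) else j)"

lemma fst_remove_point [simp]: "fst (remove_point p m) = fst p - 1"
  by (simp add: remove_point_def)

lemma is_perm_remove_point:
  assumes "is_perm p" and "m < fst p"
  shows "is_perm (remove_point p m)"
proof -
  obtain n s where p: "p = (n, s)"
    by (cases p)
  have s: "s permutes {..<n}"
    using assms(1) unfolding p is_perm_def by simp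
  define s' where "s' = (\<lambda>j. if j < n - 1 then unskip (s m) (s (skip m j)) else j)"
  have skip_ne: "s (skip m j) \<noteq> s m" for j
    using permutes_inj[OF s] skip_neq by (metis injD)
  have "s' permutes {..<n - 1}"
  proof (rule inj_imp_permutes)
    show "inj_on s' {..<n - 1}"
    proof (rule inj_onI)
      fix a b assume "a \<in> {..<n - 1}" "b \<in> {..<n - 1}" "s' a = s' b"
      then have "s (skip m a) = s (skip m b)"
        using unskip_inj skip_ne unfolding s'_def by auto
      then show "a = b"
        using permutes_inj[OF s] by (metis injD unskip_skip)
    qed
    show "s' j \<in> {..<n - 1}" if "j \<in> {..<n - 1}" for j
      using that skip_ne assms(2) permutes_in_image[OF s] skip_less unskip_less
      unfolding s'_def p by simp
  qed (auto simp: s'_def)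
  then show ?thesis
    unfolding p remove_point_def is_perm_def s'_def fst_conv snd_conv .
qed

lemma pattern_embedding_remove_point:
  assumes "is_perm p" and "m < fst p"
  shows "pattern_embedding (remove_point p m) p (skip (snd p m)) (skip m)"
proof -
  obtain n s where p: "p = (n, s)"
    by (cases p)
  have s: "s permutes {..<n}"
    using assms(1) unfolding p is_perm_def by simp
  have "s (skip m j) \<noteq> s m" for j
    using permutes_inj[OF s] skip_neq by (metis injD)
  then have "i = unskip (s m) (s (skip m j)) \<longleftrightarrow> skip (s m) i = s (skip m j)" for i j
    by (rule eq_unskip_iff)
  moreover have "strict_mono_on A (skip r)" for A r
    using strict_mono_skip by (rule monotone_on_subset) simp
  ultimately show ?thesis
    unfolding p pattern_embedding_def remove_point_def by (simp add: skip_less)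
qed

lemma pattern_embedding_avoids_col_iff_row:
  assumes emb: "pattern_embedding \<tau> p f g" and "is_perm \<tau>" and "inj (snd p)"
  shows "(\<forall>j<fst \<tau>. g j \<noteq> m) \<longleftrightarrow> (\<forall>i<fst \<tau>. f i \<noteq> snd p m)"
proof -
  obtain k st where \<tau>: "\<tau> = (k, st)"
    by (cases \<tau>)
  have st: "st permutes {..<k}"
    using assms(2) unfolding \<tau> is_perm_def by simp
  have point: "f (st j) = snd p (g j)" if "j < k" for j
  proof -
    have "st j < k"
      using that permutes_in_image[OF st] by simp
    with emb that show ?thesis
      unfolding \<tau> pattern_embedding_def fst_conv snd_conv by blast
  qed
  show ?thesis
    unfolding \<tau> fst_conv
  proof
    assume g_avoids: "\<forall>j<k. g j \<noteq> m"
    show "\<forall>i<k. f i \<noteq> snd p m"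
    proof (intro allI impI)
      fix i assume "i < k"
      then have "inv st i < k" and "st (inv st i) = i"
        using permutes_in_image[OF permutes_inv[OF st]] permutes_inverses[OF st] by auto
      then show "f i \<noteq> snd p m"
        using point g_avoids injD[OF assms(3)] by metis
    qed
  next
    assume "\<forall>i<k. f i \<noteq> snd p m"
    then show "\<forall>j<k. g j \<noteq> m"
      using point permutes_in_image[OF st] by force
  qed
qed

lemma pattern_embedding_into_remove_point:
  assumes emb: "pattern_embedding \<tau> p f g" and p: "is_perm p" and m: "m < fst p"
    and g_avoids: "\<forall>j<fst \<tau>. g j \<noteq> m" and f_avoids: "\<forall>i<fst \<tau>. f i \<noteq> snd p m"
  shows "pattern_embedding \<tau> (remove_point p m) (unskip (snd p m) \<circ> f) (unskip m \<circ> g)"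
proof -
  obtain k st n s where \<tau>_eq: "\<tau> = (k, st)" and p_eq: "p = (n, s)"
    by (cases \<tau>, cases p)
  have s: "s permutes {..<n}"
    using p unfolding p_eq is_perm_def by simp
  have f_mono: "strict_mono_on {..<k} f" and f_less: "\<forall>i<k. f i < n"
    and g_mono: "strict_mono_on {..<k} g" and g_less: "\<forall>j<k. g j < n"
    and fg: "\<forall>i<k. \<forall>j<k. i = st j \<longleftrightarrow> f i = s (g j)"
    using emb unfolding \<tau>_eq p_eq pattern_embedding_def by auto
  have g_avoids: "\<forall>j<k. g j \<noteq> m" and f_avoids: "\<forall>i<k. f i \<noteq> s m"
    using g_avoids f_avoids unfolding \<tau>_eq p_eq by simp_all
  have sm: "s m < n"
    using m permutes_in_image[OF s] unfolding p_eq by simp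
  have "strict_mono_on {..<k} (unskip (s m) \<circ> f)"
    using strict_mono_onD[OF f_mono] f_avoids by (intro strict_mono_onI) (simp add: unskip_less_unskip)
  moreover have "strict_mono_on {..<k} (unskip m \<circ> g)"
    using strict_mono_onD[OF g_mono] g_avoids by (intro strict_mono_onI) (simp add: unskip_less_unskip)
  moreover have "\<forall>i<k. unskip (s m) (f i) < n - 1"
    using f_less f_avoids sm unskip_less by blast
  moreover have g'_less: "\<forall>j<k. unskip m (g j) < n - 1"
    using g_less g_avoids m unskip_less unfolding p_eq by simp
  moreover have "i = st j \<longleftrightarrow> unskip (s m) (f i) = snd (remove_point p m) (unskip m (g j))"
    if "i < k" "j < k" for i j
  proof -
    have "s (g j) \<noteq> s m"
      using g_avoids that permutes_inj[OF s] by (metis injD)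
    then have "i = st j \<longleftrightarrow> unskip (s m) (f i) = unskip (s m) (s (g j))"
      using fg f_avoids that unskip_inj by metis
    also have "\<dots> \<longleftrightarrow> unskip (s m) (f i) = snd (remove_point p m) (unskip m (g j))"
      using g'_less g_avoids that unfolding remove_point_def p_eq by (simp add: skip_unskip)
    finally show ?thesis .
  qed
  ultimately show ?thesis
    unfolding \<tau>_eq pattern_embedding_def by (simp add: remove_point_def p_eq)
qed

lemma pattern_le_remove_point_iff:
  assumes \<tau>: "is_perm \<tau>" and p: "is_perm p" and m: "m < fst p"
  shows "pattern_le \<tau> (remove_point p m) \<longleftrightarrow>
    (\<exists>f g. pattern_embedding \<tau> p f g \<and> (\<forall>j<fst \<tau>. g j \<noteq> m))"
proof
  assume "pattern_le \<tau> (remove_point p m)"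
  then obtain f g where "pattern_embedding \<tau> (remove_point p m) f g"
    using pattern_le_iff_embedding by blast
  then have "pattern_embedding \<tau> p (skip (snd p m) \<circ> f) (skip m \<circ> g)"
    using pattern_embedding_remove_point[OF p m] by (rule pattern_embedding_trans)
  moreover have "\<forall>j<fst \<tau>. (skip m \<circ> g) j \<noteq> m"
    by (simp add: skip_neq)
  ultimately show "\<exists>f g. pattern_embedding \<tau> p f g \<and> (\<forall>j<fst \<tau>. g j \<noteq> m)"
    by blast
next
  assume "\<exists>f g. pattern_embedding \<tau> p f g \<and> (\<forall>j<fst \<tau>. g j \<noteq> m)"
  then obtain f g where emb: "pattern_embedding \<tau> p f g" and g_avoids: "\<forall>j<fst \<tau>. g j \<noteq> m"
    by blast
  moreover have "\<forall>i<fst \<tau>. f i \<noteq> snd p m"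
    using pattern_embedding_avoids_col_iff_row[OF emb \<tau>] g_avoids p
    unfolding is_perm_def by (simp add: permutes_inj)
  ultimately have "pattern_embedding \<tau> (remove_point p m) (unskip (snd p m) \<circ> f) (unskip m \<circ> g)"
    using p m by (intro pattern_embedding_into_remove_point)
  then show "pattern_le \<tau> (remove_point p m)"
    using pattern_le_iff_embedding by blast
qed

lemma submatrix_ext_mat_TopD:
  assumes "submatrix (ext_mat Top \<tau>) (perm_mat p)"
  shows "\<exists>f g. pattern_embedding \<tau> p f g \<and> (\<forall>i<fst \<tau>. f i \<noteq> fst p - 1)"
proof -
  obtain k st n s where \<tau>_eq: "\<tau> = (k, st)" and p_eq: "p = (n, s)"
    by (cases \<tau>, cases p)
  from assms obtain f g where f_mono: "strict_mono_on {..<Suc k} f" and f_less: "\<forall>i<Suc k. f i < n"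
    and g_mono: "strict_mono_on {..<k} g" and g_less: "\<forall>j<k. g j < n"
    and fg: "\<forall>i<Suc k. \<forall>j<k. (i, j) \<in> {(st j, j) |j. j < k} \<longleftrightarrow> (f i, g j) \<in> {(s j, j) |j. j < n}"
    unfolding \<tau>_eq p_eq submatrix_def perm_mat_def by auto
  have "f i < n - 1" if "i < k" for i
  proof -
    have "f i < f k"
      using strict_mono_onD[OF f_mono] that by simp
    moreover have "f k < n"
      using f_less by simp
    ultimately show ?thesis
      by linarith
  qed
  moreover have "pattern_embedding (k, st) (n, s) f g"
    using monotone_on_subset[OF f_mono] f_less g_mono g_less fg
    unfolding pattern_embedding_def by auto
  ultimately show ?thesis
    unfolding \<tau>_eq p_eq by fastforce
qed

lemma submatrix_ext_mat_TopI:
  assumes \<tau>: "is_perm \<tau>" and n: "0 < fst p" and emb: "pattern_embedding \<tau> p f g"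
    and f_avoids: "\<forall>i<fst \<tau>. f i \<noteq> fst p - 1"
  shows "submatrix (ext_mat Top \<tau>) (perm_mat p)"
proof -
  obtain k st n s where \<tau>_eq: "\<tau> = (k, st)" and p_eq: "p = (n, s)"
    by (cases \<tau>, cases p)
  have st: "st permutes {..<k}"
    using \<tau> unfolding \<tau>_eq is_perm_def by simp
  have f_mono: "strict_mono_on {..<k} f" and f_less: "\<forall>i<k. f i < n"
    and g_mono: "strict_mono_on {..<k} g" and g_less: "\<forall>j<k. g j < n"
    and fg: "\<forall>i<k. \<forall>j<k. i = st j \<longleftrightarrow> f i = s (g j)"
    and f_avoids: "\<forall>i<k. f i \<noteq> n - 1"
    using emb f_avoids unfolding \<tau>_eq p_eq pattern_embedding_def by auto
  define F where "F = f(k := n - 1)"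
  have "\<forall>i<k. f i < n - 1"
    using f_less f_avoids by fastforce
  with f_mono have F_mono: "strict_mono_on {..<Suc k} F"
    unfolding F_def by (rule strict_mono_on_fun_upd_lessThan)
  have F_less: "\<forall>i<Suc k. F i < n"
    using f_less n unfolding F_def p_eq by (simp add: less_Suc_eq)
  have F_graph: "i = st j \<longleftrightarrow> F i = s (g j)" if "i < Suc k" "j < k" for i j
  proof (cases "i = k")
    case True
    have "st j < k"
      using \<open>j < k\<close> permutes_in_image[OF st] by simp
    moreover from this have "s (g j) = f (st j)"
      using fg[rule_format, of "st j" j] \<open>j < k\<close> by simp
    moreover from \<open>st j < k\<close> have "f (st j) \<noteq> n - 1"
      using f_avoids by simp
    ultimately show ?thesis
      using True unfolding F_def by simp
  next
    case False
    then show ?thesis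
      using fg that unfolding F_def by (simp add: less_Suc_eq)
  qed
  show ?thesis
    unfolding \<tau>_eq p_eq submatrix_def perm_mat_def ext_mat.simps fst_conv snd_conv prod.case
    by (intro exI[of _ F] exI[of _ g]) (use F_mono F_less g_mono g_less F_graph in auto)
qed

lemma submatrix_ext_mat_Top_iff:
  assumes "is_perm \<tau>" and "0 < fst p"
  shows "submatrix (ext_mat Top \<tau>) (perm_mat p) \<longleftrightarrow>
    (\<exists>f g. pattern_embedding \<tau> p f g \<and> (\<forall>i<fst \<tau>. f i \<noteq> fst p - 1))"
  using submatrix_ext_mat_TopD submatrix_ext_mat_TopI[OF assms] by blast

lemma submatrix_ext_mat_BottomD:
  assumes "submatrix (ext_mat Bottom \<tau>) (perm_mat p)"
  shows "\<exists>f g. pattern_embedding \<tau> p f g \<and> (\<forall>i<fst \<tau>. f i \<noteq> 0)"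
proof -
  obtain k st n s where \<tau>_eq: "\<tau> = (k, st)" and p_eq: "p = (n, s)"
    by (cases \<tau>, cases p)
  from assms obtain F g where F_mono: "strict_mono_on {..<Suc k} F" and F_less: "\<forall>i<Suc k. F i < n"
    and g_mono: "strict_mono_on {..<k} g" and g_less: "\<forall>j<k. g j < n"
    and Fg: "\<forall>i<Suc k. \<forall>j<k.
      (i, j) \<in> {(st j + 1, j) |j. j < k} \<longleftrightarrow> (F i, g j) \<in> {(s j, j) |j. j < n}"
    unfolding \<tau>_eq p_eq submatrix_def perm_mat_def by auto
  have "(F \<circ> Suc) i \<noteq> 0" if "i < k" for i
    using strict_mono_onD[OF F_mono, of 0 "Suc i"] that by simp
  moreover have "pattern_embedding (k, st) (n, s) (F \<circ> Suc) g"
    using strict_mono_on_comp_Suc_lessThan[OF F_mono] F_less g_mono g_less Fg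
    unfolding pattern_embedding_def by auto
  ultimately show ?thesis
    unfolding \<tau>_eq p_eq by fastforce
qed

lemma submatrix_ext_mat_BottomI:
  assumes \<tau>: "is_perm \<tau>" and n: "0 < fst p" and emb: "pattern_embedding \<tau> p f g"
    and f_avoids: "\<forall>i<fst \<tau>. f i \<noteq> 0"
  shows "submatrix (ext_mat Bottom \<tau>) (perm_mat p)"
proof -
  obtain k st n s where \<tau>_eq: "\<tau> = (k, st)" and p_eq: "p = (n, s)"
    by (cases \<tau>, cases p)
  have st: "st permutes {..<k}"
    using \<tau> unfolding \<tau>_eq is_perm_def by simp
  have f_mono: "strict_mono_on {..<k} f" and f_less: "\<forall>i<k. f i < n"
    and g_mono: "strict_mono_on {..<k} g" and g_less: "\<forall>j<k. g j < n"
    and fg: "\<forall>i<k. \<forall>j<k. i = st j \<longleftrightarrow> f i = s (g j)"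
    and f_avoids: "\<forall>i<k. f i \<noteq> 0"
    using emb f_avoids unfolding \<tau>_eq p_eq pattern_embedding_def by auto
  define F where "F = case_nat 0 f"
  have "\<forall>i<k. 0 < f i"
    using f_avoids by simp
  with f_mono have F_mono: "strict_mono_on {..<Suc k} F"
    unfolding F_def by (rule strict_mono_on_case_nat_lessThan)
  have F_less: "\<forall>i<Suc k. F i < n"
    using f_less n unfolding F_def p_eq by (auto split: nat.split)
  have F_graph: "i = Suc (st j) \<longleftrightarrow> F i = s (g j)" if "i < Suc k" "j < k" for i j
  proof (cases i)
    case 0
    have "st j < k"
      using \<open>j < k\<close> permutes_in_image[OF st] by simp
    moreover from this have "s (g j) = f (st j)"
      using fg[rule_format, of "st j" j] \<open>j < k\<close> by simp
    moreover from \<open>st j < k\<close> have "f (st j) \<noteq> 0"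
      using f_avoids by simp
    ultimately show ?thesis
      using 0 unfolding F_def by simp
  next
    case (Suc i')
    then show ?thesis
      using fg that unfolding F_def by simp
  qed
  show ?thesis
    unfolding \<tau>_eq p_eq submatrix_def perm_mat_def ext_mat.simps fst_conv snd_conv prod.case
    by (intro exI[of _ F] exI[of _ g]) (use F_mono F_less g_mono g_less F_graph in auto)
qed

lemma submatrix_ext_mat_Bottom_iff:
  assumes "is_perm \<tau>" and "0 < fst p"
  shows "submatrix (ext_mat Bottom \<tau>) (perm_mat p) \<longleftrightarrow>
    (\<exists>f g. pattern_embedding \<tau> p f g \<and> (\<forall>i<fst \<tau>. f i \<noteq> 0))"
  using submatrix_ext_mat_BottomD submatrix_ext_mat_BottomI[OF assms] by blast

definition transpose_mat :: "mat01 \<Rightarrow> mat01" where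
  "transpose_mat A = (case A of (r, c, S) \<Rightarrow> (c, r, S\<inverse>))"

lemma transpose_transpose_mat [simp]: "transpose_mat (transpose_mat A) = A"
  by (simp add: transpose_mat_def split: prod.split)

lemma submatrix_transpose_matI:
  assumes "submatrix A B"
  shows "submatrix (transpose_mat A) (transpose_mat B)"
proof -
  obtain r' c' S' r c S where A: "A = (r', c', S')" and B: "B = (r, c, S)"
    by (cases A, cases B)
  from assms obtain f g where "strict_mono_on {..<r'} f" "\<forall>i<r'. f i < r"
    "strict_mono_on {..<c'} g" "\<forall>j<c'. g j < c"
    "\<forall>i<r'. \<forall>j<c'. (i, j) \<in> S' \<longleftrightarrow> (f i, g j) \<in> S"
    unfolding A B submatrix_def by auto
  then show ?thesis
    unfolding A B submatrix_def transpose_mat_def prod.case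
    by (intro exI[of _ g] exI[of _ f]) auto
qed

lemma submatrix_transpose_mat: "submatrix (transpose_mat A) (transpose_mat B) \<longleftrightarrow> submatrix A B"
  using submatrix_transpose_matI[of "transpose_mat A" "transpose_mat B"]
    submatrix_transpose_matI[of A B]
  by auto

definition perm_inv :: "perm \<Rightarrow> perm" where
  "perm_inv p = (fst p, inv (snd p))"

lemma is_perm_perm_inv: "is_perm p \<Longrightarrow> is_perm (perm_inv p)"
  unfolding is_perm_def perm_inv_def by (simp add: permutes_inv)

lemma converse_graph_permutes:
  assumes "s permutes {..<n}"
  shows "{(s j, h j) |j. j < n}\<inverse> = {(h (inv s i), i) |i. i < n}"
proof (intro set_eqI iffI)
  fix x assume "x \<in> {(s j, h j) |j. j < n}\<inverse>"
  then obtain j where "j < n" and "x = (h j, s j)"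
    by auto
  moreover have "s j < n" and "inv s (s j) = j"
    using \<open>j < n\<close> permutes_in_image[OF assms] permutes_inverses(2)[OF assms] by simp_all
  ultimately show "x \<in> {(h (inv s i), i) |i. i < n}"
    by auto
next
  fix x assume "x \<in> {(h (inv s i), i) |i. i < n}"
  then obtain i where "i < n" and "x = (h (inv s i), i)"
    by auto
  moreover have "inv s i < n" and "s (inv s i) = i"
    using \<open>i < n\<close> permutes_in_image[OF permutes_inv[OF assms]] permutes_inverses(1)[OF assms]
    by simp_all
  ultimately show "x \<in> {(s j, h j) |j. j < n}\<inverse>"
    by (auto intro!: exI[of _ "inv s i"])
qed

lemma transpose_perm_mat: "is_perm p \<Longrightarrow> transpose_mat (perm_mat p) = perm_mat (perm_inv p)"
  using converse_graph_permutes[of "snd p" "fst p" "\<lambda>j. j"]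
  by (simp add: is_perm_def perm_mat_def transpose_mat_def perm_inv_def)

lemma transpose_ext_mat_Right:
  "is_perm \<tau> \<Longrightarrow> transpose_mat (ext_mat Right \<tau>) = ext_mat Top (perm_inv \<tau>)"
  using converse_graph_permutes[of "snd \<tau>" "fst \<tau>" "\<lambda>j. j"]
  by (simp add: is_perm_def transpose_mat_def perm_inv_def)

lemma transpose_ext_mat_Left:
  "is_perm \<tau> \<Longrightarrow> transpose_mat (ext_mat Left \<tau>) = ext_mat Bottom (perm_inv \<tau>)"
  using converse_graph_permutes[of "snd \<tau>" "fst \<tau>" Suc]
  by (simp add: is_perm_def transpose_mat_def perm_inv_def)

lemma pattern_embedding_perm_inv:
  assumes "is_perm \<tau>" and "is_perm p"
  shows "pattern_embedding (perm_inv \<tau>) (perm_inv p) g f \<longleftrightarrow> pattern_embedding \<tau> p f g"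
proof -
  obtain k st n s where \<tau>_eq: "\<tau> = (k, st)" and p_eq: "p = (n, s)"
    by (cases \<tau>, cases p)
  have st: "st permutes {..<k}" and s: "s permutes {..<n}"
    using assms unfolding \<tau>_eq p_eq is_perm_def by auto
  have "i = inv st j \<longleftrightarrow> j = st i" and "g i = inv s (f j) \<longleftrightarrow> f j = s (g i)" for i j
    using permutes_inv_eq[OF st, of j i] permutes_inv_eq[OF s, of "f j" "g i"] by metis+
  then have "(\<forall>i<k. \<forall>j<k. i = inv st j \<longleftrightarrow> g i = inv s (f j)) \<longleftrightarrow>
    (\<forall>i<k. \<forall>j<k. j = st i \<longleftrightarrow> f j = s (g i))"
    by (simp only:)
  also have "\<dots> \<longleftrightarrow> (\<forall>j<k. \<forall>i<k. j = st i \<longleftrightarrow> f j = s (g i))"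
    by blast
  finally show ?thesis
    unfolding \<tau>_eq p_eq pattern_embedding_def perm_inv_def fst_conv snd_conv
    by (simp only: conj_ac)
qed

lemma submatrix_ext_mat_Right_iff:
  assumes \<tau>: "is_perm \<tau>" and p: "is_perm p" and n: "0 < fst p"
  shows "submatrix (ext_mat Right \<tau>) (perm_mat p) \<longleftrightarrow>
    (\<exists>f g. pattern_embedding \<tau> p f g \<and> (\<forall>j<fst \<tau>. g j \<noteq> fst p - 1))"
proof -
  have "submatrix (ext_mat Right \<tau>) (perm_mat p) \<longleftrightarrow>
    submatrix (transpose_mat (ext_mat Right \<tau>)) (transpose_mat (perm_mat p))"
    by (rule submatrix_transpose_mat[symmetric])
  also have "\<dots> \<longleftrightarrow> submatrix (ext_mat Top (perm_inv \<tau>)) (perm_mat (perm_inv p))"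
    by (simp only: transpose_ext_mat_Right[OF \<tau>] transpose_perm_mat[OF p])
  also have "\<dots> \<longleftrightarrow>
    (\<exists>g f. pattern_embedding (perm_inv \<tau>) (perm_inv p) g f \<and> (\<forall>j<fst \<tau>. g j \<noteq> fst p - 1))"
    using submatrix_ext_mat_Top_iff[OF is_perm_perm_inv[OF \<tau>]] n
    by (simp add: perm_inv_def)
  also have "\<dots> \<longleftrightarrow> (\<exists>f g. pattern_embedding \<tau> p f g \<and> (\<forall>j<fst \<tau>. g j \<noteq> fst p - 1))"
    unfolding pattern_embedding_perm_inv[OF \<tau> p] by (rule ex_comm)
  finally show ?thesis .
qed

lemma submatrix_ext_mat_Left_iff:
  assumes \<tau>: "is_perm \<tau>" and p: "is_perm p" and n: "0 < fst p"
  shows "submatrix (ext_mat Left \<tau>) (perm_mat p) \<longleftrightarrow>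
    (\<exists>f g. pattern_embedding \<tau> p f g \<and> (\<forall>j<fst \<tau>. g j \<noteq> 0))"
proof -
  have "submatrix (ext_mat Left \<tau>) (perm_mat p) \<longleftrightarrow>
    submatrix (transpose_mat (ext_mat Left \<tau>)) (transpose_mat (perm_mat p))"
    by (rule submatrix_transpose_mat[symmetric])
  also have "\<dots> \<longleftrightarrow> submatrix (ext_mat Bottom (perm_inv \<tau>)) (perm_mat (perm_inv p))"
    by (simp only: transpose_ext_mat_Left[OF \<tau>] transpose_perm_mat[OF p])
  also have "\<dots> \<longleftrightarrow>
    (\<exists>g f. pattern_embedding (perm_inv \<tau>) (perm_inv p) g f \<and> (\<forall>j<fst \<tau>. g j \<noteq> 0))"
    using submatrix_ext_mat_Bottom_iff[OF is_perm_perm_inv[OF \<tau>]] n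
    by (simp add: perm_inv_def)
  also have "\<dots> \<longleftrightarrow> (\<exists>f g. pattern_embedding \<tau> p f g \<and> (\<forall>j<fst \<tau>. g j \<noteq> 0))"
    unfolding pattern_embedding_perm_inv[OF \<tau> p] by (rule ex_comm)
  finally show ?thesis .
qed

fun extremal_col :: "side \<Rightarrow> perm \<Rightarrow> nat" where
  "extremal_col Top p = inv (snd p) (fst p - 1)"
| "extremal_col Bottom p = inv (snd p) 0"
| "extremal_col Right p = fst p - 1"
| "extremal_col Left p = 0"

fun extremal_cells :: "side \<Rightarrow> nat \<Rightarrow> (nat \<times> nat) set" where
  "extremal_cells Top n = (\<lambda>m. (m, n - 1)) ` {..<n}"
| "extremal_cells Bottom n = (\<lambda>m. (m, 0)) ` {..<n}"
| "extremal_cells Right n = (\<lambda>r. (n - 1, r)) ` {..<n}"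
| "extremal_cells Left n = (\<lambda>r. (0, r)) ` {..<n}"

lemma finite_extremal_cells: "finite (extremal_cells d n)"
  by (cases d) simp_all

lemma card_extremal_cells: "card (extremal_cells d n) = n"
  by (cases d) (simp_all add: card_image inj_on_def)

lemma extremal_cells_fst_less: "x \<in> extremal_cells d n \<Longrightarrow> fst x < n"
  by (cases d) auto

lemma extremal_point_mem_extremal_cells:
  assumes "is_perm p" and "0 < fst p"
  shows "(extremal_col d p, snd p (extremal_col d p)) \<in> extremal_cells d (fst p)"
proof -
  obtain n s where p: "p = (n, s)"
    by (cases p)
  have s: "s permutes {..<n}"
    using assms(1) unfolding p is_perm_def by simp
  have "inv s r < n" and "s (inv s r) = r" if "r < n" for r
    using that permutes_in_image[OF permutes_inv[OF s]] permutes_inverses(1)[OF s] by simp_all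
  moreover have "s r < n" if "r < n" for r
    using that permutes_in_image[OF s] by simp
  ultimately show ?thesis
    using assms(2) unfolding p by (cases d) auto
qed

lemma extremal_col_less: "is_perm p \<Longrightarrow> 0 < fst p \<Longrightarrow> extremal_col d p < fst p"
  using extremal_cells_fst_less extremal_point_mem_extremal_cells by fastforce

lemma submatrix_ext_mat_iff_embedding_avoiding_extremal_col:
  assumes \<tau>: "is_perm \<tau>" and p: "is_perm p" and n: "0 < fst p"
  shows "submatrix (ext_mat d \<tau>) (perm_mat p) \<longleftrightarrow>
    (\<exists>f g. pattern_embedding \<tau> p f g \<and> (\<forall>j<fst \<tau>. g j \<noteq> extremal_col d p))"
proof (cases d)
  case Top
  have "snd p (extremal_col Top p) = fst p - 1"
    using p permutes_inverses(1) unfolding is_perm_def by simp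
  then have "(\<forall>j<fst \<tau>. g j \<noteq> extremal_col d p) \<longleftrightarrow> (\<forall>i<fst \<tau>. f i \<noteq> fst p - 1)"
    if "pattern_embedding \<tau> p f g" for f g
    using pattern_embedding_avoids_col_iff_row[OF that \<tau>] p Top permutes_inj
    unfolding is_perm_def by metis
  then show ?thesis
    using submatrix_ext_mat_Top_iff[OF \<tau> n] Top by blast
next
  case Bottom
  have "snd p (extremal_col Bottom p) = 0"
    using p permutes_inverses(1) unfolding is_perm_def by simp
  then have "(\<forall>j<fst \<tau>. g j \<noteq> extremal_col d p) \<longleftrightarrow> (\<forall>i<fst \<tau>. f i \<noteq> 0)"
    if "pattern_embedding \<tau> p f g" for f g
    using pattern_embedding_avoids_col_iff_row[OF that \<tau>] p Bottom permutes_inj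
    unfolding is_perm_def by metis
  then show ?thesis
    using submatrix_ext_mat_Bottom_iff[OF \<tau> n] Bottom by blast
next
  case Right
  then show ?thesis
    using submatrix_ext_mat_Right_iff[OF \<tau> p n] by simp
next
  case Left
  then show ?thesis
    using submatrix_ext_mat_Left_iff[OF \<tau> p n] by simp
qed

lemma submatrix_ext_mat_iff_pattern_le_remove_point:
  assumes "is_perm \<tau>" and "is_perm p" and "0 < fst p"
  shows "submatrix (ext_mat d \<tau>) (perm_mat p) \<longleftrightarrow> pattern_le \<tau> (remove_point p (extremal_col d p))"
  using submatrix_ext_mat_iff_embedding_avoiding_extremal_col[OF assms]
    pattern_le_remove_point_iff[OF assms(1,2) extremal_col_less[OF assms(2,3)]]
  by simp

lemma remove_point_inject:
  assumes p: "is_perm p" and q: "is_perm q" and "fst p = fst q" and m: "m < fst p"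
    and "snd p m = snd q m" and "remove_point p m = remove_point q m"
  shows "p = q"
proof -
  obtain n s t where p_eq: "p = (n, s)" and q_eq: "q = (n, t)"
    using assms(3) by (cases p, cases q) auto
  have s: "s permutes {..<n}" and t: "t permutes {..<n}"
    using p q unfolding p_eq q_eq is_perm_def by auto
  have "s j = t j" for j
  proof (cases "j < n \<and> j \<noteq> m")
    case True
    then have "unskip m j < n - 1" and "skip m (unskip m j) = j"
      using m unskip_less skip_unskip unfolding p_eq by auto
    then have "unskip (s m) (s j) = unskip (t m) (t j)"
      using fun_cong[OF arg_cong[where f = snd, OF assms(6)], of "unskip m j"]
      unfolding p_eq q_eq remove_point_def by simp
    moreover have "s j \<noteq> s m" and "t j \<noteq> t m"
      using True by (simp_all add: inj_eq[OF permutes_inj[OF s]] inj_eq[OF permutes_inj[OF t]])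
    moreover have "s m = t m"
      using assms(5) unfolding p_eq q_eq by simp
    ultimately show ?thesis
      using unskip_inj[of "s j" "s m" "t j"] by simp
  next
    case False
    then show ?thesis
      using assms(5) permutes_not_in[OF s] permutes_not_in[OF t] unfolding p_eq q_eq by auto
  qed
  then show ?thesis
    unfolding p_eq q_eq by auto
qed

definition perms_of_size :: "nat \<Rightarrow> perm set" where
  "perms_of_size n = {p. is_perm p \<and> fst p = n}"

lemma perms_of_size_eq_image: "perms_of_size n = Pair n ` {s. s permutes {..<n}}"
  unfolding perms_of_size_def is_perm_def by force

lemma finite_perms_of_size: "finite (perms_of_size n)"
  by (simp add: perms_of_size_eq_image finite_permutations)

lemma card_perms_of_size: "card (perms_of_size n) = fact n"
  by (simp add: perms_of_size_eq_image card_image inj_on_def card_permutations)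

definition remove_extremal_point :: "side \<Rightarrow> perm \<Rightarrow> (nat \<times> nat) \<times> perm" where
  "remove_extremal_point d p =
     ((extremal_col d p, snd p (extremal_col d p)), remove_point p (extremal_col d p))"

lemma inj_on_remove_extremal_point: "inj_on (remove_extremal_point d) (perms_of_size (Suc n))"
proof (rule inj_onI)
  fix p q assume p: "p \<in> perms_of_size (Suc n)" and q: "q \<in> perms_of_size (Suc n)"
    and eq: "remove_extremal_point d p = remove_extremal_point d q"
  define m where "m = extremal_col d p"
  have col: "extremal_col d q = m"
    using arg_cong[OF eq, of "\<lambda>x. fst (fst x)"] unfolding m_def remove_extremal_point_def by simp
  have "is_perm p" and "is_perm q" and "fst p = fst q"
    using p q unfolding perms_of_size_def by simp_all
  moreover have "m < fst p"
    using extremal_col_less[OF \<open>is_perm p\<close>] p unfolding m_def perms_of_size_def by simp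
  moreover have "snd p m = snd q m"
    using arg_cong[OF eq, of "\<lambda>x. snd (fst x)"]
    by (simp add: remove_extremal_point_def col m_def[symmetric])
  moreover have "remove_point p m = remove_point q m"
    using arg_cong[OF eq, of snd] by (simp add: remove_extremal_point_def col m_def[symmetric])
  ultimately show "p = q"
    by (rule remove_point_inject)
qed

lemma remove_extremal_point_mem:
  assumes "p \<in> perms_of_size (Suc n)"
  shows "remove_extremal_point d p \<in> extremal_cells d (Suc n) \<times> perms_of_size n"
proof -
  from assms have p: "is_perm p" and size: "fst p = Suc n"
    unfolding perms_of_size_def by simp_all
  then have "(extremal_col d p, snd p (extremal_col d p)) \<in> extremal_cells d (Suc n)"
    using extremal_point_mem_extremal_cells[OF p] by simp
  moreover have "remove_point p (extremal_col d p) \<in> perms_of_size n"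
    using is_perm_remove_point[OF p extremal_col_less[OF p]] size unfolding perms_of_size_def by simp
  ultimately show ?thesis
    unfolding remove_extremal_point_def by simp
qed

text \<open>Surjectivity is obtained by counting: both sides have (n + 1)! elements.\<close>

lemma bij_betw_remove_extremal_point:
  "bij_betw (remove_extremal_point d) (perms_of_size (Suc n)) (extremal_cells d (Suc n) \<times> perms_of_size n)"
proof -
  have "remove_extremal_point d ` perms_of_size (Suc n) \<subseteq> extremal_cells d (Suc n) \<times> perms_of_size n"
    using remove_extremal_point_mem by blast
  moreover have "card (remove_extremal_point d ` perms_of_size (Suc n)) =
    card (extremal_cells d (Suc n) \<times> perms_of_size n)"
    using card_image[OF inj_on_remove_extremal_point]
    by (simp add: card_perms_of_size card_cartesian_product card_extremal_cells)
  ultimately have "remove_extremal_point d ` perms_of_size (Suc n) = extremal_cells d (Suc n) \<times> perms_of_size n"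
    using finite_perms_of_size finite_extremal_cells by (intro card_subset_eq) simp_all
  with inj_on_remove_extremal_point show ?thesis
    unfolding bij_betw_def by simp
qed

lemma card_remove_extremal_point_preimage:
  assumes "\<forall>q\<in>C. is_perm q"
  shows "card {p \<in> perms_of_size (Suc n). snd (remove_extremal_point d p) \<in> C} = Suc n * count_size C n"
proof -
  have "bij_betw (remove_extremal_point d) {p \<in> perms_of_size (Suc n). snd (remove_extremal_point d p) \<in> C}
    {x \<in> extremal_cells d (Suc n) \<times> perms_of_size n. snd x \<in> C}"
    by (rule bij_betw_Collect[OF bij_betw_remove_extremal_point]) simp
  then have "card {p \<in> perms_of_size (Suc n). snd (remove_extremal_point d p) \<in> C} =
    card {x \<in> extremal_cells d (Suc n) \<times> perms_of_size n. snd x \<in> C}"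
    by (rule bij_betw_same_card)
  also have "{x \<in> extremal_cells d (Suc n) \<times> perms_of_size n. snd x \<in> C} =
    extremal_cells d (Suc n) \<times> {q \<in> C. fst q = n}"
    using assms unfolding perms_of_size_def by auto
  finally show ?thesis
    by (simp add: card_cartesian_product card_extremal_cells count_size_def)
qed

lemma mem_Av_ext_mat_p_basis_iff:
  assumes C: "perm_class C" and p: "is_perm p" and n: "0 < fst p"
  shows "p \<in> Av (ext_mat d ` p_basis C) \<longleftrightarrow> remove_point p (extremal_col d p) \<in> C"
proof -
  have "submatrix (ext_mat d \<tau>) (perm_mat p) \<longleftrightarrow> pattern_le \<tau> (remove_point p (extremal_col d p))"
    if "\<tau> \<in> p_basis C" for \<tau>
  proof -
    from that have "is_perm \<tau>"
      unfolding p_basis_def by simp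
    then show ?thesis
      using submatrix_ext_mat_iff_pattern_le_remove_point[OF _ p n] by simp
  qed
  then have bex_iff: "(\<exists>\<tau>\<in>p_basis C. submatrix (ext_mat d \<tau>) (perm_mat p)) \<longleftrightarrow>
    (\<exists>\<tau>\<in>p_basis C. pattern_le \<tau> (remove_point p (extremal_col d p)))"
    by (rule bex_cong[OF refl])
  have "p \<in> Av (ext_mat d ` p_basis C) \<longleftrightarrow>
    \<not> (\<exists>\<tau>\<in>p_basis C. submatrix (ext_mat d \<tau>) (perm_mat p))"
    using p unfolding Av_def by blast
  also have "\<dots> \<longleftrightarrow> \<not> (\<exists>\<tau>\<in>p_basis C. pattern_le \<tau> (remove_point p (extremal_col d p)))"
    by (simp only: bex_iff)
  also have "\<dots> \<longleftrightarrow> remove_point p (extremal_col d p) \<in> C"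
    using perm_class_mem_iff_avoids_basis[OF C is_perm_remove_point[OF p extremal_col_less[OF p n]]]
    by (rule sym)
  finally show ?thesis .
qed

lemma Av_ext_mat_p_basis_of_size:
  assumes "perm_class C" and "0 < n"
  shows "{p \<in> Av (ext_mat d ` p_basis C). fst p = n} =
    {p \<in> perms_of_size n. snd (remove_extremal_point d p) \<in> C}"
proof (intro set_eqI)
  fix p
  show "p \<in> {p \<in> Av (ext_mat d ` p_basis C). fst p = n} \<longleftrightarrow>
    p \<in> {p \<in> perms_of_size n. snd (remove_extremal_point d p) \<in> C}"
  proof (cases "is_perm p \<and> fst p = n")
    case True
    then show ?thesis
      using mem_Av_ext_mat_p_basis_iff[OF assms(1), of p d] assms(2)
      unfolding perms_of_size_def remove_extremal_point_def by simp
  next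
    case False
    then show ?thesis
      unfolding Av_def perms_of_size_def by auto
  qed
qed

theorem corollary2:
  fixes C :: "perm set" and d :: side and n :: nat
  assumes "perm_class C"
    and "n \<ge> 1"
  shows "count_size (Av ((\<lambda>\<tau>. ext_mat d \<tau>) ` p_basis C)) n = n * count_size C (n - 1)"
proof -
  obtain n' where n: "n = Suc n'"
    using assms(2) by (cases n) auto
  have "count_size (Av (ext_mat d ` p_basis C)) n =
    card {p \<in> perms_of_size n. snd (remove_extremal_point d p) \<in> C}"
    unfolding count_size_def using Av_ext_mat_p_basis_of_size[OF assms(1)] n by simp
  also have "\<dots> = n * count_size C n'"
    using card_remove_extremal_point_preimage[of C] assms(1) n unfolding perm_class_def by simp
  finally show ?thesis
    using n by simp
qed

end
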